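(* Let $\mathcal{H}$ be a finite-dimensional Hilbert space, let $P, Q$ be orthogonal projectors on $\mathcal{H}$, and define $$f(P,Q) := \min_{\tilde P \in \mathrm{Proj}(\mathcal{H})}\|PQP - \tilde P\|.$$ Then $\|[P,Q]\| = \sqrt{f(P,Q) - f(P,Q)^2}$.
   Context: $\mathrm{Proj}(\mathcal{H})$ is the set of orthogonal projectors on $\mathcal{H}$, $\|\cdot\|$ the operator norm, $[P,Q] = PQ - QP$. *)

theory Defs
  imports "HOL-Analysis.Analysis"
begin

text \<open>The finite-dimensional Hilbert space is modelled as complex^'n (standard inner product,
  Euclidean norm); operators are complex 'n x 'n matrices.\<close>

definition cadjoint :: "complex^'n^'n \<Rightarrow> complex^'n^'n" where
  "cadjoint A = (\<chi> i j. cnj (A $ j $ i))"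

definition orth_proj :: "complex^'n^'n \<Rightarrow> bool" where
  "orth_proj P \<longleftrightarrow> P ** P = P \<and> cadjoint P = P"

definition opnorm :: "complex^'n^'n \<Rightarrow> real" where
  "opnorm A = onorm (\<lambda>x. A *v x)"

definition commutator :: "complex^'n^'n \<Rightarrow> complex^'n^'n \<Rightarrow> complex^'n^'n" where
  "commutator P Q = P ** Q - Q ** P"

definition fdist :: "complex^'n^'n \<Rightarrow> complex^'n^'n \<Rightarrow> real" where
  "fdist P Q = Inf ((\<lambda>R. opnorm (P ** Q ** P - R)) ` {R. orth_proj R})"

end

theory Submission
  imports Defs
begin

text \<open>View \<open>complex^'n\<close> as a real inner product space with \<open>x \<bullet> y = Re \<langle>x, y\<rangle>\<close>. Then
  \<open>A = PQP\<close> is self-adjoint with spectrum in \<open>[0, 1]\<close> and has an orthonormal eigenbasis.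
  The block \<open>K = (1 - P) Q P\<close> satisfies \<open>K\<^sup>* K = A - A\<^sup>2\<close>, and \<open>[P, Q] = K\<^sup>* (1 - P) - K P\<close> is a
  sum of two pieces with orthogonal ranges, so \<open>\<parallel>[P, Q]\<parallel> = \<parallel>K\<parallel> = sqrt (max (\<lambda> - \<lambda>\<^sup>2))\<close> over the
  eigenvalues \<open>\<lambda>\<close> of \<open>A\<close>. On a unit eigenvector with eigenvalue \<open>\<lambda>\<close>, every projection is at
  distance at least \<open>min \<lambda> (1 - \<lambda>)\<close> from \<open>A\<close>, and the spectral projection of \<open>A\<close> onto the
  eigenvalues \<open>\<ge> 1/2\<close> attains \<open>m = max (min \<lambda> (1 - \<lambda>))\<close>; it is complex linear because it
  commutes with multiplication by \<open>\<i>\<close>. Hence \<open>f(P, Q) = m\<close>, and \<open>max (\<lambda> - \<lambda>\<^sup>2) = m - m\<^sup>2\<close>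
  since \<open>t - t\<^sup>2\<close> is symmetric about \<open>1/2\<close> and increasing below it.\<close>

section \<open>Self-adjoint operators and the spectral theorem\<close>

definition selfadjoint :: "('a::real_inner \<Rightarrow> 'a) \<Rightarrow> bool" where
  "selfadjoint f \<longleftrightarrow> (\<forall>x y. f x \<bullet> y = x \<bullet> f y)"

definition orthonormal_basis :: "'a::real_inner set \<Rightarrow> bool" where
  "orthonormal_basis B \<longleftrightarrow>
     finite B \<and> pairwise orthogonal B \<and> (\<forall>b\<in>B. norm b = 1) \<and> span B = UNIV"

definition orthonormal_eigenbasis :: "('a::real_inner \<Rightarrow> 'a) \<Rightarrow> 'a set \<Rightarrow> bool" where
  "orthonormal_eigenbasis f B \<longleftrightarrow> orthonormal_basis B \<and> (\<forall>b\<in>B. f b = (f b \<bullet> b) *\<^sub>R b)"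

lemma linear_coeff_eq_0_if_quadratic_nonneg:
  fixes c d :: real
  assumes "d \<ge> 0" and nonneg: "\<And>t. 0 \<le> 2 * t * c + t\<^sup>2 * d"
  shows "c = 0"
proof -
  define t where "t = - c / (d + 1)"
  have t: "t * (d + 1) = - c"
    using \<open>d \<ge> 0\<close> by (simp add: t_def)
  have "(2 * t * c + t\<^sup>2 * d) * (d + 1)\<^sup>2 = 2 * c * (t * (d + 1)) * (d + 1) + (t * (d + 1))\<^sup>2 * d"
    by (simp add: power2_eq_square algebra_simps)
  also have "\<dots> = - c\<^sup>2 * (d + 2)"
    unfolding t by (simp add: power2_eq_square algebra_simps)
  finally have "(2 * t * c + t\<^sup>2 * d) * (d + 1)\<^sup>2 = - c\<^sup>2 * (d + 2)" .
  moreover have "0 \<le> (2 * t * c + t\<^sup>2 * d) * (d + 1)\<^sup>2"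
    using nonneg by simp
  ultimately have "c\<^sup>2 * (d + 2) \<le> 0"
    by linarith
  with \<open>d \<ge> 0\<close> show "c = 0"
    by (simp add: mult_le_0_iff)
qed

lemma rayleigh_quotient_attains_max:
  fixes f :: "'a::euclidean_space \<Rightarrow> 'a"
  assumes lin: "linear f" and S: "subspace S" "S \<noteq> {0}"
  obtains v where "v \<in> S" "norm v = 1" "\<And>y. y \<in> S \<Longrightarrow> f y \<bullet> y \<le> (f v \<bullet> v) * (y \<bullet> y)"
proof -
  let ?K = "sphere 0 1 \<inter> S"
  have K: "compact ?K"
    using closed_subspace[OF S(1)] by (simp add: compact_Int_closed)
  obtain x where "x \<in> S" "x \<noteq> 0"
    using S subspace_0 by blast
  then have "(1 / norm x) *\<^sub>R x \<in> ?K"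
    using S(1) by (simp add: subspace_scale)
  then have K_ne: "?K \<noteq> {}"
    by blast
  have "continuous_on ?K (\<lambda>y. f y \<bullet> y)"
    using lin linear_conv_bounded_linear by (intro continuous_intros linear_continuous_on) blast
  then obtain v where v: "v \<in> ?K" and max: "\<And>y. y \<in> ?K \<Longrightarrow> f y \<bullet> y \<le> f v \<bullet> v"
    using continuous_attains_sup[OF K K_ne] by blast
  have "f y \<bullet> y \<le> (f v \<bullet> v) * (y \<bullet> y)" if "y \<in> S" for y
  proof (cases "y = 0")
    case True
    then show ?thesis
      by (simp add: linear_0[OF lin])
  next
    case False
    then have "(1 / norm y) *\<^sub>R y \<in> ?K"
      using S(1) \<open>y \<in> S\<close> by (simp add: subspace_scale)
    then have "f ((1 / norm y) *\<^sub>R y) \<bullet> ((1 / norm y) *\<^sub>R y) \<le> f v \<bullet> v"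
      by (rule max)
    then have "(1 / norm y)\<^sup>2 * (f y \<bullet> y) \<le> f v \<bullet> v"
      by (simp add: linear_scale[OF lin] power2_eq_square)
    then have "f y \<bullet> y \<le> (f v \<bullet> v) * (norm y)\<^sup>2"
      using False by (simp add: field_simps)
    then show ?thesis
      by (simp add: power2_norm_eq_inner)
  qed
  with v that show ?thesis
    by auto
qed

text \<open>Variational characterisation: with \<open>T = M - f\<close> positive semidefinite on \<open>S\<close> and
  \<open>T v \<bullet> v = 0\<close>, expanding \<open>T (v + t y) \<bullet> (v + t y) \<ge> 0\<close> forces \<open>T v \<bullet> y = 0\<close> for all \<open>y \<in> S\<close>.\<close>
lemma selfadjoint_rayleigh_maximiser_is_eigenvector:
  fixes f :: "'a::real_inner \<Rightarrow> 'a"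
  assumes lin: "linear f" and sa: "selfadjoint f" and S: "subspace S" "f ` S \<subseteq> S"
    and v: "v \<in> S" "norm v = 1"
    and max: "\<And>y. y \<in> S \<Longrightarrow> f y \<bullet> y \<le> (f v \<bullet> v) * (y \<bullet> y)"
  shows "f v = (f v \<bullet> v) *\<^sub>R v"
proof -
  define M where "M = f v \<bullet> v"
  define T where "T y = M *\<^sub>R y - f y" for y
  have T_nonneg: "0 \<le> T y \<bullet> y" if "y \<in> S" for y
    using max[OF that] by (simp add: T_def M_def inner_diff_left)
  have "T v \<bullet> v = 0"
    using \<open>norm v = 1\<close> by (simp add: T_def M_def inner_diff_left norm_eq_1)
  moreover have T_sym: "T y \<bullet> z = y \<bullet> T z" for y z
    using sa by (simp add: T_def inner_diff_left inner_diff_right selfadjoint_def)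
  moreover have T_lin: "T (v + t *\<^sub>R y) = T v + t *\<^sub>R T y" for y t
    using lin by (simp add: T_def linear_add linear_scale algebra_simps)
  ultimately have T_orth: "T v \<bullet> y = 0" if "y \<in> S" for y
  proof (intro linear_coeff_eq_0_if_quadratic_nonneg)
    show "0 \<le> T y \<bullet> y"
      using T_nonneg[OF that] .
    fix t :: real
    have "v + t *\<^sub>R y \<in> S"
      using v \<open>y \<in> S\<close> S by (simp add: subspace_add subspace_scale)
    then have "0 \<le> T (v + t *\<^sub>R y) \<bullet> (v + t *\<^sub>R y)"
      by (rule T_nonneg)
    also have "\<dots> = 2 * t * (T v \<bullet> y) + t\<^sup>2 * (T y \<bullet> y)"
      using \<open>T v \<bullet> v = 0\<close> T_sym[of y v]
      by (simp add: T_lin inner_add_left inner_add_right inner_commute algebra_simps power2_eq_square)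
    finally show "0 \<le> 2 * t * (T v \<bullet> y) + t\<^sup>2 * (T y \<bullet> y)" .
  qed
  have "T v \<in> S"
    using v S by (auto simp: T_def intro!: subspace_diff subspace_scale)
  then have "T v = 0"
    using T_orth[OF \<open>T v \<in> S\<close>] by simp
  then show ?thesis
    by (simp add: T_def M_def)
qed

lemma selfadjoint_invariant_orthogonal_complement:
  assumes sa: "selfadjoint f" and "f ` S \<subseteq> S" and v: "f v = c *\<^sub>R v"
  shows "f ` (S \<inter> {y. orthogonal v y}) \<subseteq> S \<inter> {y. orthogonal v y}"
proof
  fix z assume "z \<in> f ` (S \<inter> {y. orthogonal v y})"
  then obtain y where y: "y \<in> S" "v \<bullet> y = 0" "z = f y"
    by (auto simp: orthogonal_def)
  have "v \<bullet> f y = f v \<bullet> y"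
    using sa by (simp add: selfadjoint_def)
  also have "\<dots> = 0"
    using y(2) by (simp add: v)
  finally show "z \<in> S \<inter> {y. orthogonal v y}"
    using y \<open>f ` S \<subseteq> S\<close> by (auto simp: orthogonal_def)
qed

lemma span_insert_unit_orthogonal_complement:
  assumes S: "subspace S" and v: "v \<in> S" "norm v = 1"
    and B: "span B = S \<inter> {y. orthogonal v y}"
  shows "span (insert v B) = S"
proof
  show "span (insert v B) \<subseteq> S"
    using S v span_minimal[of "insert v B" S] span_superset[of B] by (auto simp: B)
  show "S \<subseteq> span (insert v B)"
  proof
    fix y assume "y \<in> S"
    then have "y - (y \<bullet> v) *\<^sub>R v \<in> span B"
      using v S unfolding B
      by (auto simp: orthogonal_def inner_diff_right inner_commute norm_eq_1
          intro!: subspace_diff subspace_scale)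
    then have "y - (y \<bullet> v) *\<^sub>R v \<in> span (insert v B)"
      using span_mono[of B "insert v B"] by blast
    moreover have "(y \<bullet> v) *\<^sub>R v \<in> span (insert v B)"
      by (simp add: span_base span_scale)
    ultimately show "y \<in> span (insert v B)"
      using span_add by fastforce
  qed
qed

lemma selfadjoint_orthonormal_eigenbasis_of_subspace:
  fixes f :: "'a::euclidean_space \<Rightarrow> 'a"
  assumes lin: "linear f" and sa: "selfadjoint f"
  shows "subspace S \<Longrightarrow> f ` S \<subseteq> S \<Longrightarrow> \<exists>B. finite B \<and> B \<subseteq> S \<and> pairwise orthogonal B \<and>
     (\<forall>b\<in>B. norm b = 1 \<and> f b = (f b \<bullet> b) *\<^sub>R b) \<and> span B = S"
proof (induction "dim S" arbitrary: S rule: less_induct)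
  case less
  show ?case
  proof (cases "S = {0}")
    case True
    then show ?thesis
      by (intro exI[of _ "{}"]) auto
  next
    case False
    obtain v where v: "v \<in> S" "norm v = 1" "f v = (f v \<bullet> v) *\<^sub>R v"
      using rayleigh_quotient_attains_max[OF lin less.prems(1) False]
        selfadjoint_rayleigh_maximiser_is_eigenvector[OF lin sa less.prems] by metis
    define S' where "S' = S \<inter> {y. orthogonal v y}"
    have S': "subspace S'"
      unfolding S'_def using less.prems(1) subspace_orthogonal_to_vector by (metis subspace_inter)
    have "dim S' < dim S"
    proof (rule dim_psubset)
      have "v \<notin> S'"
        using v(2) by (simp add: S'_def orthogonal_def norm_eq_1)
      then show "span S' \<subset> span S"
        using S' less.prems(1) v(1) S'_def by (metis Int_lower1 psubsetI span_eq_iff)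
    qed
    then obtain B' where B': "finite B'" "B' \<subseteq> S'" "pairwise orthogonal B'"
      "\<forall>b\<in>B'. norm b = 1 \<and> f b = (f b \<bullet> b) *\<^sub>R b" "span B' = S'"
      using less.hyps[OF _ S'] selfadjoint_invariant_orthogonal_complement[OF sa less.prems(2) v(3)]
      unfolding S'_def by blast
    have "span (insert v B') = S"
      using span_insert_unit_orthogonal_complement[OF less.prems(1) v(1,2)] B'(5) S'_def by blast
    moreover have "pairwise orthogonal (insert v B')"
      using B' by (auto simp: pairwise_insert S'_def orthogonal_commute)
    ultimately show ?thesis
      using B' v by (intro exI[of _ "insert v B'"]) (auto simp: S'_def)
  qed
qed

lemma selfadjoint_orthonormal_eigenbasis:
  fixes f :: "'a::euclidean_space \<Rightarrow> 'a"
  assumes "linear f" and "selfadjoint f"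
  obtains B where "orthonormal_eigenbasis f B"
  using selfadjoint_orthonormal_eigenbasis_of_subspace[OF assms subspace_UNIV]
  unfolding orthonormal_eigenbasis_def orthonormal_basis_def by blast

lemma orthonormal_basis_inner:
  assumes "orthonormal_basis B" "b \<in> B" "c \<in> B"
  shows "b \<bullet> c = (if b = c then 1 else 0)"
  using assms unfolding orthonormal_basis_def pairwise_def orthogonal_def
  by (auto simp: norm_eq_1)

lemma orthonormal_basis_sum_expand:
  assumes "orthonormal_basis B"
  shows "(\<Sum>b\<in>B. (x \<bullet> b) *\<^sub>R b) = x"
  using assms unfolding orthonormal_basis_def by (intro orthonormal_basis_expand) auto

lemma orthonormal_basis_nonempty:
  fixes B :: "'a::euclidean_space set"
  assumes "orthonormal_basis B"
  shows "B \<noteq> {}"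
proof
  assume "B = {}"
  with assms have "(UNIV :: 'a set) = {0}"
    by (simp add: orthonormal_basis_def)
  moreover obtain e :: 'a where "e \<in> Basis"
    using nonempty_Basis by blast
  ultimately show False
    using nonzero_Basis by auto
qed

lemma diagonal_inner_sum:
  assumes B: "orthonormal_basis B" and sa: "selfadjoint D"
    and D: "\<And>b. b \<in> B \<Longrightarrow> D b = d b *\<^sub>R b"
  shows "D x \<bullet> y = (\<Sum>b\<in>B. d b * (x \<bullet> b) * (y \<bullet> b))"
proof -
  have "D x \<bullet> y = D x \<bullet> (\<Sum>b\<in>B. (y \<bullet> b) *\<^sub>R b)"
    using orthonormal_basis_sum_expand[OF B] by simp
  also have "\<dots> = (\<Sum>b\<in>B. (y \<bullet> b) * (x \<bullet> D b))"
    using sa by (simp add: inner_sum_right selfadjoint_def)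
  also have "\<dots> = (\<Sum>b\<in>B. d b * (x \<bullet> b) * (y \<bullet> b))"
    by (intro sum.cong refl) (simp add: D)
  finally show ?thesis .
qed

lemma diagonal_quadratic_form_le:
  assumes B: "orthonormal_basis B" and sa: "selfadjoint D"
    and D: "\<And>b. b \<in> B \<Longrightarrow> D b = d b *\<^sub>R b" and M: "\<And>b. b \<in> B \<Longrightarrow> d b \<le> M"
  shows "D x \<bullet> x \<le> M * (x \<bullet> x)"
proof -
  have "D x \<bullet> x = (\<Sum>b\<in>B. d b * (x \<bullet> b) * (x \<bullet> b))"
    by (rule diagonal_inner_sum[OF B sa D])
  also have "\<dots> \<le> (\<Sum>b\<in>B. M * (x \<bullet> b) * (x \<bullet> b))"
    using M by (intro sum_mono) (simp add: mult.assoc mult_right_mono)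
  also have "\<dots> = M * (x \<bullet> x)"
    using diagonal_inner_sum[OF B, of id "\<lambda>_. 1" x x]
    by (simp add: selfadjoint_def sum_distrib_left mult.assoc)
  finally show ?thesis .
qed

lemma diagonal_norm_le:
  assumes B: "orthonormal_basis B" and "linear D" "selfadjoint D"
    and D: "\<And>b. b \<in> B \<Longrightarrow> D b = d b *\<^sub>R b" and M: "\<And>b. b \<in> B \<Longrightarrow> \<bar>d b\<bar> \<le> M" and "0 \<le> M"
  shows "norm (D x) \<le> M * norm x"
proof (rule power2_le_imp_le)
  have "selfadjoint (\<lambda>x. D (D x))"
    using \<open>selfadjoint D\<close> by (simp add: selfadjoint_def)
  moreover have "D (D b) = (d b)\<^sup>2 *\<^sub>R b" if "b \<in> B" for b
    using \<open>linear D\<close> by (simp add: D[OF that] linear_scale power2_eq_square)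
  moreover have "(d b)\<^sup>2 \<le> M\<^sup>2" if "b \<in> B" for b
    using power_mono[OF M[OF that] abs_ge_zero, of 2] by simp
  ultimately have "D (D x) \<bullet> x \<le> M\<^sup>2 * (x \<bullet> x)"
    by (rule diagonal_quadratic_form_le[OF B])
  moreover have "D (D x) \<bullet> x = (norm (D x))\<^sup>2"
    using \<open>selfadjoint D\<close> by (simp add: selfadjoint_def power2_norm_eq_inner)
  ultimately show "(norm (D x))\<^sup>2 \<le> (M * norm x)\<^sup>2"
    by (simp add: power_mult_distrib power2_norm_eq_inner)
  show "0 \<le> M * norm x"
    using \<open>0 \<le> M\<close> by simp
qed

section \<open>Orthogonal projections\<close>

definition orthogonal_projection :: "('a::real_inner \<Rightarrow> 'a) \<Rightarrow> bool" where
  "orthogonal_projection p \<longleftrightarrow> linear p \<and> selfadjoint p \<and> (\<forall>x. p (p x) = p x)"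

lemma orthogonal_projection_inner_self:
  assumes "orthogonal_projection p"
  shows "p x \<bullet> x = (norm (p x))\<^sup>2"
  using assms by (metis orthogonal_projection_def power2_norm_eq_inner selfadjoint_def)

lemma orthogonal_projection_norm_le:
  assumes "orthogonal_projection p"
  shows "norm (p x) \<le> norm x"
proof -
  have "(norm (p x))\<^sup>2 \<le> norm (p x) * norm x"
    using orthogonal_projection_inner_self[OF assms, of x] norm_cauchy_schwarz[of "p x" x] by simp
  then show ?thesis
    by (cases "p x = 0") (auto simp: power2_eq_square)
qed

lemma orthogonal_projection_complement_orthogonal:
  assumes "orthogonal_projection p"
  shows "(x - p x) \<bullet> p y = 0"
  using assms by (simp add: orthogonal_projection_def selfadjoint_def inner_diff_left)

lemma orthogonal_projection_bounded_linear:
  assumes "orthogonal_projection p"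
  shows "bounded_linear p"
  using assms orthogonal_projection_norm_le[OF assms]
  by (auto simp: orthogonal_projection_def bounded_linear_def bounded_linear_axioms_def intro!: exI[of _ 1])

text \<open>With \<open>r = \<parallel>R b\<parallel>\<^sup>2 \<in> [0, 1]\<close> one has \<open>\<parallel>l b - R b\<parallel>\<^sup>2 = l\<^sup>2 - 2 l r + r\<close>, which is affine in \<open>r\<close>
  and equals \<open>l\<^sup>2\<close> resp. \<open>(1 - l)\<^sup>2\<close> at the endpoints.\<close>
lemma orthogonal_projection_eigenvector_dist:
  assumes R: "orthogonal_projection R" and "norm b = 1" and "0 \<le> l" "l \<le> 1"
  shows "min l (1 - l) \<le> norm (l *\<^sub>R b - R b)"
proof (rule power2_le_imp_le)
  define r where "r = (norm (R b))\<^sup>2"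
  have "r \<le> 1"
    using orthogonal_projection_norm_le[OF R, of b] \<open>norm b = 1\<close> by (simp add: r_def power_le_one)
  have "R b \<bullet> b = r" "R b \<bullet> R b = r" "b \<bullet> b = 1"
    using orthogonal_projection_inner_self[OF R, of b] \<open>norm b = 1\<close>
    by (simp_all add: r_def power2_norm_eq_inner norm_eq_1)
  then have "(norm (l *\<^sub>R b - R b))\<^sup>2 = l\<^sup>2 - 2 * l * r + r"
    unfolding power2_norm_eq_inner
    by (simp add: inner_diff_left inner_diff_right inner_commute power2_eq_square)
  moreover have "(min l (1 - l))\<^sup>2 \<le> l\<^sup>2 - 2 * l * r + r"
  proof (cases "l \<le> 1/2")
    case True
    then have "0 \<le> (1 - 2 * l) * r"
      by (simp add: r_def)
    with True show ?thesis
      by (simp add: min_def algebra_simps)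
  next
    case False
    then have "0 \<le> (2 * l - 1) * (1 - r)"
      using \<open>r \<le> 1\<close> by simp
    with False show ?thesis
      by (simp add: min_def algebra_simps power2_eq_square)
  qed
  ultimately show "(min l (1 - l))\<^sup>2 \<le> (norm (l *\<^sub>R b - R b))\<^sup>2"
    by simp
qed simp

definition basis_proj :: "'a::real_inner set \<Rightarrow> 'a \<Rightarrow> 'a" where
  "basis_proj C x = (\<Sum>b\<in>C. (x \<bullet> b) *\<^sub>R b)"

lemma basis_proj_basis_vector:
  assumes B: "orthonormal_basis B" and "C \<subseteq> B" "c \<in> B"
  shows "basis_proj C c = (if c \<in> C then c else 0)"
proof -
  have "finite C"
    using B \<open>C \<subseteq> B\<close> finite_subset by (auto simp: orthonormal_basis_def)
  moreover have "basis_proj C c = (\<Sum>b\<in>C. if c = b then b else 0)"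
    unfolding basis_proj_def using assms
    by (intro sum.cong refl) (auto simp: orthonormal_basis_inner)
  ultimately show ?thesis
    by simp
qed

lemma orthogonal_projection_basis_proj:
  assumes B: "orthonormal_basis B" and "C \<subseteq> B"
  shows "orthogonal_projection (basis_proj C)"
  unfolding orthogonal_projection_def
proof (intro conjI allI)
  show "linear (basis_proj C)"
    unfolding linear_iff basis_proj_def
    by (simp add: inner_add_left scaleR_add_left sum.distrib scaleR_sum_right)
  show sa: "selfadjoint (basis_proj C)"
    unfolding selfadjoint_def basis_proj_def
    by (simp add: inner_sum_left inner_sum_right inner_commute mult.commute)
  fix x
  have "basis_proj C x \<bullet> b = x \<bullet> b" if "b \<in> C" for b
    using sa basis_proj_basis_vector[OF assms, of b] that \<open>C \<subseteq> B\<close>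
    by (auto simp: selfadjoint_def)
  then show "basis_proj C (basis_proj C x) = basis_proj C x"
    by (metis (no_types, lifting) basis_proj_def sum.cong)
qed

lemma basis_proj_eigenvector:
  assumes B: "orthonormal_eigenbasis f B" and sa: "selfadjoint f" and v: "f v = \<mu> *\<^sub>R v"
  shows "basis_proj {b\<in>B. f b \<bullet> b \<in> T} v = (if \<mu> \<in> T then v else 0)"
proof -
  have B': "orthonormal_basis B" and fB: "finite B"
    using B by (auto simp: orthonormal_eigenbasis_def orthonormal_basis_def)
  have orth: "v \<bullet> b = 0" if "b \<in> B" "f b \<bullet> b \<noteq> \<mu>" for b
  proof -
    have "\<mu> * (v \<bullet> b) = f v \<bullet> b"
      using v by simp
    also have "\<dots> = v \<bullet> f b"
      using sa by (simp add: selfadjoint_def)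
    also have "\<dots> = (f b \<bullet> b) * (v \<bullet> b)"
      using B that(1) by (metis orthonormal_eigenbasis_def inner_scaleR_right)
    finally show ?thesis
      using that(2) by simp
  qed
  show ?thesis
  proof (cases "\<mu> \<in> T")
    case True
    have "basis_proj {b\<in>B. f b \<bullet> b \<in> T} v = (\<Sum>b\<in>B. (v \<bullet> b) *\<^sub>R b)"
      unfolding basis_proj_def using fB orth True
      by (intro sum.mono_neutral_left) auto
    with True show ?thesis
      by (simp add: orthonormal_basis_sum_expand[OF B'])
  next
    case False
    then have "basis_proj {b\<in>B. f b \<bullet> b \<in> T} v = 0"
      unfolding basis_proj_def using orth by (intro sum.neutral) auto
    with False show ?thesis
      by simp
  qed
qed

text \<open>A linear map commuting with \<open>f\<close> preserves the eigenspaces of \<open>f\<close>.\<close>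
lemma basis_proj_commute:
  assumes B: "orthonormal_eigenbasis f B" and sa: "selfadjoint f"
    and "linear J" and fJ: "\<And>x. f (J x) = J (f x)"
  shows "basis_proj {b\<in>B. f b \<bullet> b \<in> T} (J x) = J (basis_proj {b\<in>B. f b \<bullet> b \<in> T} x)"
proof -
  let ?C = "{b\<in>B. f b \<bullet> b \<in> T}"
  have B': "orthonormal_basis B" and fB: "finite B"
    using B by (auto simp: orthonormal_eigenbasis_def orthonormal_basis_def)
  have J_b: "basis_proj ?C (J b) = (if b \<in> ?C then J b else 0)" if "b \<in> B" for b
  proof -
    have "f (J b) = (f b \<bullet> b) *\<^sub>R J b"
      using B that \<open>linear J\<close> by (metis fJ orthonormal_eigenbasis_def linear_scale)
    then show ?thesis
      using that by (simp add: basis_proj_eigenvector[OF B sa])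
  qed
  have "linear (basis_proj ?C)"
    using orthogonal_projection_basis_proj[OF B'] by (simp add: orthogonal_projection_def)
  have "basis_proj ?C (J x) = basis_proj ?C (J (\<Sum>b\<in>B. (x \<bullet> b) *\<^sub>R b))"
    by (simp add: orthonormal_basis_sum_expand[OF B'])
  also have "\<dots> = (\<Sum>b\<in>B. (x \<bullet> b) *\<^sub>R basis_proj ?C (J b))"
    by (simp add: linear_sum[OF \<open>linear J\<close>] linear_scale[OF \<open>linear J\<close>]
        linear_sum[OF \<open>linear (basis_proj ?C)\<close>] linear_scale[OF \<open>linear (basis_proj ?C)\<close>])
  also have "\<dots> = (\<Sum>b\<in>B. if b \<in> ?C then (x \<bullet> b) *\<^sub>R J b else 0)"
    by (intro sum.cong refl) (simp add: J_b)
  also have "\<dots> = (\<Sum>b\<in>B. J (if b \<in> ?C then (x \<bullet> b) *\<^sub>R b else 0))"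
    using \<open>linear J\<close> by (intro sum.cong refl) (simp add: linear_0 linear_scale)
  also have "\<dots> = J (basis_proj ?C x)"
    using fB by (simp add: sum.inter_filter basis_proj_def linear_sum[OF \<open>linear J\<close>])
  finally show ?thesis .
qed

section \<open>Two projections\<close>

locale projection_pair =
  fixes p q :: "'a::real_inner \<Rightarrow> 'a"
  assumes proj_p: "orthogonal_projection p" and proj_q: "orthogonal_projection q"
begin

definition compression :: "'a \<Rightarrow> 'a" where
  "compression x = p (q (p x))"

text \<open>The off-diagonal block \<open>(1 - p) q p\<close> of \<open>q\<close> with respect to \<open>p\<close>.\<close>
definition corner :: "'a \<Rightarrow> 'a" where
  "corner x = q (p x) - p (q (p x))"

definition comm :: "'a \<Rightarrow> 'a" where
  "comm x = p (q x) - q (p x)"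

lemma
  shows lin_p: "linear p" and sa_p: "selfadjoint p" and idem_p: "p (p x) = p x"
    and lin_q: "linear q" and sa_q: "selfadjoint q"
  using proj_p proj_q by (auto simp: orthogonal_projection_def)

lemma linear_compression: "linear compression"
  using linear_compose[OF linear_compose[OF lin_p lin_q] lin_p] by (simp add: compression_def[abs_def] o_def)

lemma selfadjoint_compression: "selfadjoint compression"
  using sa_p sa_q by (simp add: selfadjoint_def compression_def)

lemma compression_inner_self: "compression x \<bullet> x = (norm (q (p x)))\<^sup>2"
  using sa_p orthogonal_projection_inner_self[OF proj_q, of "p x"]
  by (simp add: compression_def selfadjoint_def)

lemma compression_inner_bounds: "0 \<le> compression x \<bullet> x" "compression x \<bullet> x \<le> (norm x)\<^sup>2"
proof -
  show "0 \<le> compression x \<bullet> x"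
    by (simp add: compression_inner_self)
  have "norm (q (p x)) \<le> norm x"
    using orthogonal_projection_norm_le[OF proj_q] orthogonal_projection_norm_le[OF proj_p] order_trans
    by blast
  then show "compression x \<bullet> x \<le> (norm x)\<^sup>2"
    by (simp add: compression_inner_self power_mono)
qed

lemma norm_corner_sq: "(norm (corner x))\<^sup>2 = compression x \<bullet> x - compression (compression x) \<bullet> x"
proof -
  define z where "z = q (p x)"
  have "orthogonal (z - p z) (p z)"
    using orthogonal_projection_complement_orthogonal[OF proj_p] by (simp add: orthogonal_def)
  then have "(norm z)\<^sup>2 = (norm (corner x))\<^sup>2 + (norm (p z))\<^sup>2"
    using norm_add_Pythagorean by (fastforce simp: corner_def z_def)
  moreover have "(norm z)\<^sup>2 = compression x \<bullet> x"
    by (simp add: z_def compression_inner_self)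
  moreover have "(norm (p z))\<^sup>2 = compression (compression x) \<bullet> x"
    using selfadjoint_compression
    by (simp add: z_def compression_def selfadjoint_def power2_norm_eq_inner[symmetric])
  ultimately show ?thesis
    by simp
qed

lemma corner_orthogonal: "p v \<bullet> corner u = 0"
  using sa_p idem_p by (simp add: corner_def inner_diff_right selfadjoint_def)

lemma comm_decomp: "comm x = p (q (x - p x)) - corner (p x)"
  using lin_p lin_q idem_p by (simp add: comm_def corner_def linear_diff)

lemma norm_comm_sq: "(norm (comm x))\<^sup>2 = (norm (p (q (x - p x))))\<^sup>2 + (norm (corner (p x)))\<^sup>2"
proof -
  have "orthogonal (p (q (x - p x))) (- corner (p x))"
    using corner_orthogonal by (simp add: orthogonal_def)
  then show ?thesis
    using norm_add_Pythagorean by (fastforce simp: comm_decomp)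
qed

lemma norm_corner_le_norm_comm: "norm (corner x) \<le> norm (comm x)"
proof (rule power2_le_imp_le)
  show "(norm (corner x))\<^sup>2 \<le> (norm (comm x))\<^sup>2"
    using idem_p by (simp add: norm_comm_sq corner_def)
qed simp

text \<open>The block \<open>p q (1 - p)\<close> is the adjoint of \<open>corner\<close>, hence obeys the same bound.\<close>
lemma norm_comm_le:
  assumes corner_le: "\<And>y. norm (corner y) \<le> c * norm y" and "0 \<le> c"
  shows "norm (comm x) \<le> c * norm x"
proof (rule power2_le_imp_le)
  have adj_le: "norm (p (q w)) \<le> c * norm w" if "p w = 0" for w
  proof -
    define v where "v = p (q w)"
    have "w \<bullet> p y = 0" for y
      using sa_p that by (metis inner_zero_left selfadjoint_def)
    then have "(norm v)\<^sup>2 = w \<bullet> corner v"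
      using sa_p sa_q unfolding selfadjoint_def
      by (simp add: v_def corner_def inner_diff_right power2_norm_eq_inner)
    also have "\<dots> \<le> norm w * norm (corner v)"
      by (rule norm_cauchy_schwarz)
    also have "\<dots> \<le> norm w * (c * norm v)"
      by (intro mult_left_mono corner_le norm_ge_zero)
    finally have "norm v * norm v \<le> norm v * (c * norm w)"
      by (simp add: power2_eq_square algebra_simps)
    then show ?thesis
      using \<open>0 \<le> c\<close> by (cases "v = 0") (auto simp: v_def)
  qed
  have "p (x - p x) = 0"
    using lin_p idem_p by (simp add: linear_diff)
  then have "(norm (comm x))\<^sup>2 \<le> (c * norm (x - p x))\<^sup>2 + (c * norm (p x))\<^sup>2"
    unfolding norm_comm_sq by (intro add_mono power_mono adj_le corner_le) simp_all
  also have "\<dots> = c\<^sup>2 * ((norm (x - p x))\<^sup>2 + (norm (p x))\<^sup>2)"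
    by (simp add: power_mult_distrib algebra_simps)
  also have "(norm (x - p x))\<^sup>2 + (norm (p x))\<^sup>2 = (norm x)\<^sup>2"
    using orthogonal_projection_complement_orthogonal[OF proj_p, of x x]
      norm_add_Pythagorean[of "x - p x" "p x"] by (simp add: orthogonal_def)
  finally show "(norm (comm x))\<^sup>2 \<le> (c * norm x)\<^sup>2"
    by (simp add: power_mult_distrib)
  show "0 \<le> c * norm x"
    using \<open>0 \<le> c\<close> by simp
qed

lemma bounded_linear_comm: "bounded_linear comm"
proof -
  have p: "bounded_linear p" and q: "bounded_linear q"
    using proj_p proj_q by (simp_all add: orthogonal_projection_bounded_linear)
  show ?thesis
    unfolding comm_def
    by (rule bounded_linear_sub[OF bounded_linear_compose[OF p q] bounded_linear_compose[OF q p]])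
qed

end

lemma diff_square_mono:
  fixes s t :: real
  assumes "0 \<le> s" "s \<le> t" "t \<le> 1/2"
  shows "s - s\<^sup>2 \<le> t - t\<^sup>2"
proof -
  have "(t - t\<^sup>2) - (s - s\<^sup>2) = (t - s) * (1 - t - s)"
    by (simp add: algebra_simps power2_eq_square)
  also have "\<dots> \<ge> 0"
    using assms by (intro mult_nonneg_nonneg) auto
  finally show ?thesis
    by simp
qed

lemma min_compl_variance:
  fixes l :: real
  shows "min l (1 - l) - (min l (1 - l))\<^sup>2 = l - l\<^sup>2"
  by (simp add: min_def algebra_simps power2_eq_square)

locale projection_pair_eigenbasis = projection_pair p q
  for p q :: "'a::euclidean_space \<Rightarrow> 'a" +
  fixes B :: "'a set"
  assumes eigenbasis: "orthonormal_eigenbasis compression B"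
begin

definition eigenvalue :: "'a \<Rightarrow> real" where
  "eigenvalue b = compression b \<bullet> b"

definition gap :: real where
  "gap = Max ((\<lambda>b. min (eigenvalue b) (1 - eigenvalue b)) ` B)"

definition spectral_proj :: "'a \<Rightarrow> 'a" where
  "spectral_proj = basis_proj {b\<in>B. eigenvalue b \<in> {1/2..}}"

lemma basis: "orthonormal_basis B" and finite_basis: "finite B"
  using eigenbasis by (simp_all add: orthonormal_eigenbasis_def orthonormal_basis_def)

lemma compression_basis: "b \<in> B \<Longrightarrow> compression b = eigenvalue b *\<^sub>R b"
  using eigenbasis by (simp add: orthonormal_eigenbasis_def eigenvalue_def)

lemma norm_basis: "b \<in> B \<Longrightarrow> norm b = 1"
  using basis by (simp add: orthonormal_basis_def)

lemma eigenvalue_bounds: "b \<in> B \<Longrightarrow> 0 \<le> eigenvalue b \<and> eigenvalue b \<le> 1"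
  using compression_inner_bounds[of b] norm_basis by (simp add: eigenvalue_def)

lemma min_eigenvalue_le_gap: "b \<in> B \<Longrightarrow> min (eigenvalue b) (1 - eigenvalue b) \<le> gap"
  unfolding gap_def using finite_basis by simp

lemma gap_attained:
  obtains b where "b \<in> B" "min (eigenvalue b) (1 - eigenvalue b) = gap"
proof -
  have "gap \<in> (\<lambda>b. min (eigenvalue b) (1 - eigenvalue b)) ` B"
    unfolding gap_def using finite_basis orthonormal_basis_nonempty[OF basis] by (intro Max_in) auto
  then obtain b where "b \<in> B" "gap = min (eigenvalue b) (1 - eigenvalue b)"
    by blast
  with that show ?thesis
    by simp
qed

lemma gap_bounds: "0 \<le> gap" "gap \<le> 1/2"
proof -
  obtain b where "b \<in> B" "min (eigenvalue b) (1 - eigenvalue b) = gap"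
    by (rule gap_attained)
  with eigenvalue_bounds[of b] show "0 \<le> gap" "gap \<le> 1/2"
    by auto
qed

lemma gap_variance_nonneg: "0 \<le> gap - gap\<^sup>2"
proof -
  have "gap - gap\<^sup>2 = gap * (1 - gap)"
    by (simp add: algebra_simps power2_eq_square)
  with gap_bounds show ?thesis
    by simp
qed

lemma eigenvalue_variance_le:
  assumes "b \<in> B"
  shows "eigenvalue b - (eigenvalue b)\<^sup>2 \<le> gap - gap\<^sup>2"
proof -
  have "min (eigenvalue b) (1 - eigenvalue b) - (min (eigenvalue b) (1 - eigenvalue b))\<^sup>2 \<le> gap - gap\<^sup>2"
    using eigenvalue_bounds[OF assms] min_eigenvalue_le_gap[OF assms] gap_bounds
    by (intro diff_square_mono) auto
  then show ?thesis
    by (simp only: min_compl_variance)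
qed

text \<open>\<open>corner\<^sup>* corner = compression - compression\<^sup>2\<close> is diagonal in the eigenbasis, with
  entries \<open>\<lambda> - \<lambda>\<^sup>2 \<le> gap - gap\<^sup>2\<close>.\<close>
lemma norm_corner_le: "norm (corner x) \<le> sqrt (gap - gap\<^sup>2) * norm x"
proof (rule power2_le_imp_le)
  have "selfadjoint (\<lambda>x. compression x - compression (compression x))"
    using selfadjoint_compression by (simp add: selfadjoint_def inner_diff_left inner_diff_right)
  moreover have "compression b - compression (compression b)
      = (eigenvalue b - (eigenvalue b)\<^sup>2) *\<^sub>R b" if "b \<in> B" for b
    using compression_basis[OF that] linear_compression
    by (simp add: linear_scale power2_eq_square algebra_simps)
  ultimately have "(compression x - compression (compression x)) \<bullet> x \<le> (gap - gap\<^sup>2) * (x \<bullet> x)"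
    by (rule diagonal_quadratic_form_le[OF basis _ _ eigenvalue_variance_le])
  then show "(norm (corner x))\<^sup>2 \<le> (sqrt (gap - gap\<^sup>2) * norm x)\<^sup>2"
    unfolding norm_corner_sq
    unfolding power_mult_distrib real_sqrt_pow2[OF gap_variance_nonneg] power2_norm_eq_inner
    by (simp add: inner_diff_left)
  show "0 \<le> sqrt (gap - gap\<^sup>2) * norm x"
    using gap_variance_nonneg by simp
qed

lemma onorm_comm: "onorm comm = sqrt (gap - gap\<^sup>2)"
proof (rule antisym)
  show "onorm comm \<le> sqrt (gap - gap\<^sup>2)"
    by (intro onorm_le norm_comm_le norm_corner_le real_sqrt_ge_zero gap_variance_nonneg)
  obtain b where b: "b \<in> B" "min (eigenvalue b) (1 - eigenvalue b) = gap"
    by (rule gap_attained)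
  have "(norm (corner b))\<^sup>2 = eigenvalue b - (eigenvalue b)\<^sup>2"
    using compression_basis[OF b(1)] linear_compression norm_basis[OF b(1)]
    unfolding norm_corner_sq by (simp add: linear_scale power2_eq_square norm_eq_1 inner_diff_left)
  also have "\<dots> = gap - gap\<^sup>2"
    by (metis b(2) min_compl_variance)
  finally have "sqrt (gap - gap\<^sup>2) = norm (corner b)"
    by (simp add: real_sqrt_unique)
  also have "\<dots> \<le> norm (comm b)"
    by (rule norm_corner_le_norm_comm)
  also have "\<dots> \<le> onorm comm"
    using onorm[OF bounded_linear_comm, of b] norm_basis[OF b(1)] by simp
  finally show "sqrt (gap - gap\<^sup>2) \<le> onorm comm" .
qed

lemma gap_le_onorm_dist:
  assumes R: "orthogonal_projection R"
  shows "gap \<le> onorm (\<lambda>x. compression x - R x)"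
proof -
  obtain b where b: "b \<in> B" "min (eigenvalue b) (1 - eigenvalue b) = gap"
    by (rule gap_attained)
  have "bounded_linear compression"
    using linear_compression linear_conv_bounded_linear by blast
  then have "bounded_linear (\<lambda>x. compression x - R x)"
    using orthogonal_projection_bounded_linear[OF R] by (rule bounded_linear_sub)
  have "gap \<le> norm (eigenvalue b *\<^sub>R b - R b)"
    using orthogonal_projection_eigenvector_dist[OF R norm_basis[OF b(1)]] eigenvalue_bounds[OF b(1)] b(2)
    by metis
  also have "\<dots> = norm (compression b - R b)"
    using compression_basis[OF b(1)] by simp
  also have "\<dots> \<le> onorm (\<lambda>x. compression x - R x)"
    using onorm[OF \<open>bounded_linear (\<lambda>x. compression x - R x)\<close>, of b] norm_basis[OF b(1)] by simp
  finally show ?thesis .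
qed

lemma orthogonal_projection_spectral_proj: "orthogonal_projection spectral_proj"
  unfolding spectral_proj_def by (rule orthogonal_projection_basis_proj[OF basis]) auto

text \<open>\<open>compression - spectral_proj\<close> is diagonal with entries \<open>\<lambda>\<close> or \<open>\<lambda> - 1\<close>,
  whichever is closer to \<open>0\<close>.\<close>
lemma onorm_dist_spectral_proj_le: "onorm (\<lambda>x. compression x - spectral_proj x) \<le> gap"
proof (rule onorm_le)
  let ?C = "{b\<in>B. eigenvalue b \<in> {1/2..}}"
  fix x
  show "norm (compression x - spectral_proj x) \<le> gap * norm x"
  proof (rule diagonal_norm_le[OF basis, where d = "\<lambda>b. eigenvalue b - (if b \<in> ?C then 1 else 0)"])
    show "linear (\<lambda>x. compression x - spectral_proj x)"
      using linear_compression orthogonal_projection_spectral_proj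
      by (simp add: orthogonal_projection_def linear_compose_sub)
    show "selfadjoint (\<lambda>x. compression x - spectral_proj x)"
      using selfadjoint_compression orthogonal_projection_spectral_proj
      by (simp add: orthogonal_projection_def selfadjoint_def inner_diff_left inner_diff_right)
    show "compression b - spectral_proj b = (eigenvalue b - (if b \<in> ?C then 1 else 0)) *\<^sub>R b"
      if "b \<in> B" for b
      using compression_basis[OF that] basis_proj_basis_vector[OF basis _ that, of ?C]
      by (simp add: spectral_proj_def algebra_simps)
    show "\<bar>eigenvalue b - (if b \<in> ?C then 1 else 0)\<bar> \<le> gap" if "b \<in> B" for b
      using min_eigenvalue_le_gap[OF that] eigenvalue_bounds[OF that] that
      by (auto simp: min_def split: if_split_asm)
    show "0 \<le> gap"
      by (rule gap_bounds)
  qed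
qed

lemma spectral_proj_commute:
  assumes "linear J" and "\<And>x. compression (J x) = J (compression x)"
  shows "spectral_proj (J x) = J (spectral_proj x)"
  unfolding spectral_proj_def eigenvalue_def
  using basis_proj_commute[OF eigenbasis selfadjoint_compression assms] .

end

section \<open>Complex matrices\<close>

lemma inner_vec_complex: "(x :: complex^'n) \<bullet> y = Re (\<Sum>i\<in>UNIV. x$i * cnj (y$i))"
  by (simp add: inner_vec_def inner_complex_def)

lemma inner_cadjoint:
  fixes A :: "complex^'n^'n"
  shows "(A *v x) \<bullet> y = x \<bullet> (cadjoint A *v y)"
proof -
  have "(\<Sum>i\<in>UNIV. (\<Sum>j\<in>UNIV. A$i$j * x$j) * cnj (y$i))
      = (\<Sum>i\<in>UNIV. \<Sum>j\<in>UNIV. A$i$j * x$j * cnj (y$i))"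
    by (simp add: sum_distrib_right)
  also have "\<dots> = (\<Sum>j\<in>UNIV. \<Sum>i\<in>UNIV. A$i$j * x$j * cnj (y$i))"
    by (rule sum.swap)
  also have "\<dots> = (\<Sum>j\<in>UNIV. x$j * cnj (\<Sum>i\<in>UNIV. cnj (A$i$j) * y$i))"
    by (simp add: sum_distrib_left mult_ac)
  finally have "(\<Sum>i\<in>UNIV. (\<Sum>j\<in>UNIV. A$i$j * x$j) * cnj (y$i))
      = (\<Sum>j\<in>UNIV. x$j * cnj (\<Sum>i\<in>UNIV. cnj (A$i$j) * y$i))" .
  then show ?thesis
    unfolding inner_vec_complex matrix_vector_mult_def cadjoint_def by simp
qed

lemma orthogonal_projection_orth_proj:
  fixes P :: "complex^'n^'n"
  assumes "orth_proj P"
  shows "orthogonal_projection ((*v) P)"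
  using assms inner_cadjoint[of P]
  by (simp add: orthogonal_projection_def orth_proj_def selfadjoint_def matrix_vector_mul_assoc)

lemma complex_linear_if_commutes_ii:
  fixes f :: "complex^'n \<Rightarrow> complex^'m"
  assumes "linear f" and f_ii: "\<And>x. f (\<i> *s x) = \<i> *s f x"
  shows "Vector_Spaces.linear (*s) (*s) f"
proof unfold_locales
  have split: "c *s v = Re c *\<^sub>R v + Im c *\<^sub>R (\<i> *s v)" for c and v :: "complex^'k"
    by (simp add: vec_eq_iff complex_eq_iff algebra_simps)
  show "f (c *s x) = c *s f x" for c x
    using \<open>linear f\<close> by (simp add: split[of c] linear_add linear_scale f_ii)
  show "f (x + y) = f x + f y" for x y
    using \<open>linear f\<close> by (rule linear_add)
qed

lemma orth_proj_matrix:
  fixes R :: "complex^'n \<Rightarrow> complex^'n"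
  assumes R: "orthogonal_projection R" and R_ii: "\<And>x. R (\<i> *s x) = \<i> *s R x"
  shows "orth_proj (matrix R)" and "matrix R *v x = R x"
proof -
  have R_mat: "matrix R *v x = R x" for x
    using R R_ii by (intro matrix_works complex_linear_if_commutes_ii) (simp add: orthogonal_projection_def)
  then show "matrix R *v x = R x" .
  have "cadjoint (matrix R) *v y = matrix R *v y" for y
  proof -
    have "x \<bullet> (cadjoint (matrix R) *v y - matrix R *v y) = 0" for x
      using R inner_cadjoint[of "matrix R" x y]
      by (simp add: R_mat inner_diff_right orthogonal_projection_def selfadjoint_def)
    from this[of "cadjoint (matrix R) *v y - matrix R *v y"] show ?thesis
      by simp
  qed
  then show "orth_proj (matrix R)"
    using R
    by (simp add: orth_proj_def matrix_eq matrix_vector_mul_assoc[symmetric] R_mat orthogonal_projection_def)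
qed

locale matrix_projection_pair = projection_pair_eigenbasis "(*v) P" "(*v) Q" B
  for P Q :: "complex^'n^'n" and B :: "(complex^'n) set"
begin

lemma opnorm_commutator: "opnorm (commutator P Q) = onorm comm"
  by (simp add: opnorm_def commutator_def comm_def[abs_def] matrix_vector_mult_diff_rdistrib
      matrix_vector_mul_assoc)

lemma opnorm_dist: "opnorm (P ** Q ** P - R) = onorm (\<lambda>x. compression x - R *v x)"
  by (simp add: opnorm_def compression_def matrix_vector_mult_diff_rdistrib matrix_vector_mul_assoc
      matrix_mul_assoc)

lemma spectral_proj_ii: "spectral_proj (\<i> *s x) = \<i> *s spectral_proj x"
proof (rule spectral_proj_commute)
  show "linear (\<lambda>x :: complex^'n. \<i> *s x)"
    by (simp add: linear_iff vec_eq_iff scaleR_conv_of_real algebra_simps)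
  show "compression (\<i> *s x) = \<i> *s compression x" for x
    by (simp add: compression_def vector_scalar_commute)
qed

lemma fdist_eq_gap: "fdist P Q = gap"
  unfolding fdist_def
proof (rule cInf_eq_minimum)
  note R = orth_proj_matrix[OF orthogonal_projection_spectral_proj spectral_proj_ii]
  have "opnorm (P ** Q ** P - matrix spectral_proj) = onorm (\<lambda>x. compression x - spectral_proj x)"
    by (simp add: opnorm_dist R(2))
  also have "\<dots> = gap"
    using onorm_dist_spectral_proj_le gap_le_onorm_dist[OF orthogonal_projection_spectral_proj]
    by (rule antisym)
  finally show "gap \<in> (\<lambda>R. opnorm (P ** Q ** P - R)) ` {R. orth_proj R}"
    using R(1) by (intro image_eqI[where x = "matrix spectral_proj"]) simp_all
next
  fix y assume "y \<in> (\<lambda>R. opnorm (P ** Q ** P - R)) ` {R. orth_proj R}"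
  then obtain R where "orth_proj R" "y = opnorm (P ** Q ** P - R)"
    by blast
  then show "gap \<le> y"
    using opnorm_dist[of R] gap_le_onorm_dist[OF orthogonal_projection_orth_proj] by simp
qed

end

theorem lemma7:
  fixes P Q :: "complex^'n^'n"
  assumes "orth_proj P" and "orth_proj Q"
  shows "opnorm (commutator P Q) = sqrt (fdist P Q - (fdist P Q)^2)"
proof -
  interpret projection_pair "(*v) P" "(*v) Q"
    using assms by (intro projection_pair.intro orthogonal_projection_orth_proj)
  obtain B where "orthonormal_eigenbasis compression B"
    using selfadjoint_orthonormal_eigenbasis linear_compression selfadjoint_compression by blast
  then interpret matrix_projection_pair P Q B
    by unfold_locales
  show ?thesis
    using opnorm_commutator onorm_comm fdist_eq_gap by simp
qed

end
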